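(* Let $k\geq 8$ and $2k+1\leq n\leq 3k$ be integers, and let $h(n,k)=\binom{n-1}{k-1}-\binom{n-k-1}{k-1}+1$. Then \[ \binom{n-2}{k-2}+2\binom{n-3}{k-2}+\frac{h(n,k)^2}{\binom{n-2}{k-2}+2\binom{n-3}{k-2}}>2\binom{n-1}{k-1}. \] *)

theory Defs
  imports Complex_Main
begin

definition h :: "nat \<Rightarrow> nat \<Rightarrow> real" where
  "h n k = real ((n - 1) choose (k - 1)) - real ((n - k - 1) choose (k - 1)) + 1"

end

(*
  Write B = C(n-1,k-1), c = C(n-k-1,k-1) and A for the denominator, so that h = B - c + 1.
  The claim A + h^2/A > 2B reads (B - A)^2 + h^2 > B^2, and as h > B - c it suffices that
  2Bc <= (B - A)^2. Absorption gives (B - A)(n-1)(n-2) = B(n-k)(n-2k), which turns this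
  into 2(n-1)^2(n-2)^2 c <= (n-k)^2(n-2k)^2 B. With n = 2k + m the quotient B/c is the
  Pochhammer quotient (k+m+1)_(k-1) / (m+1)_(k-1), whose factors all exceed 3/2; this
  settles k >= 16, and the cases 8 <= k <= 15 are checked by computation.
*)
theory Submission
  imports Defs
begin

lemma real_choose_eq_pochhammer:
  "real ((a + r) choose r) = pochhammer (real a + 1) r / fact r"
  by (simp add: binomial_gbinomial gbinomial_pochhammer')

lemma pochhammer_numeral: "pochhammer a (numeral n) = a * pochhammer (a + 1) (pred_numeral n)"
  by (simp add: numeral_eq_Suc pochhammer_rec)

lemma pochhammer_shift_ge_power:
  fixes a K :: real
  assumes "0 < a" "a + r \<le> 2 * K + 1"
  shows "(3/2)^r * pochhammer a r \<le> pochhammer (a + K) r"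
  using assms
proof (induction r arbitrary: a)
  case 0
  then show ?case by simp
next
  case (Suc r)
  have "(3/2)^Suc r * pochhammer a (Suc r) = (3/2 * a) * ((3/2)^r * pochhammer (a + 1) r)"
    by (simp add: pochhammer_rec)
  also have "\<dots> \<le> (a + K) * pochhammer (a + 1 + K) r"
    using Suc.IH[of "a + 1"] Suc.prems pochhammer_pos[of "a + 1" r]
    by (intro mult_mono) auto
  also have "\<dots> = pochhammer (a + K) (Suc r)"
    by (simp add: pochhammer_rec add_ac)
  finally show ?case .
qed

lemma double_lt_add_square_div:
  fixes A B c :: real
  assumes "0 < A" "0 \<le> c" "c \<le> B" "2 * B * c \<le> (B - A)^2"
  shows "2 * B < A + (B - c + 1)^2 / A"
proof -
  have "2 * A * B - A^2 = B^2 - (B - A)^2" by algebra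
  also have "\<dots> \<le> B^2 - 2 * B * c + c^2"
    using assms(4) zero_le_power2[of c] by linarith
  also have "\<dots> = (B - c)^2" by algebra
  also have "\<dots> < (B - c + 1)^2"
    using assms(3) by (intro power_strict_mono) auto
  finally have "2 * A * B < A^2 + (B - c + 1)^2" by simp
  then show ?thesis
    using assms(1) by (simp add: field_simps power2_eq_square)
qed

lemma choose_difference_identity:
  fixes n k :: nat
  assumes "2 \<le> k" "k \<le> n"
  shows "(real ((n - 1) choose (k - 1)) - real ((n - 2) choose (k - 2)) - 2 * real ((n - 3) choose (k - 2)))
           * ((real n - 1) * (real n - 2))
         = real ((n - 1) choose (k - 1)) * (real n - real k) * (real n - 2 * real k)"
proof -
  define B a1 a2 where "B = real ((n - 1) choose (k - 1))"
    and "a1 = real ((n - 2) choose (k - 2))" and "a2 = real ((n - 3) choose (k - 2))"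
  have "(k - 1) * ((n - 1) choose (k - 1)) = (n - 1) * ((n - 2) choose (k - 2))"
    using binomial_absorption[of "k - 2" "n - 1"] assms by (simp add: Suc_diff_Suc numeral_2_eq_2)
  then have "real (k - 1) * B = real (n - 1) * a1"
    unfolding B_def a1_def by (metis of_nat_mult)
  then have absorb: "(real k - 1) * B = (real n - 1) * a1"
    using assms by simp
  have "(n - k) * ((n - 2) choose (k - 2)) = (n - 2) * ((n - 3) choose (k - 2))"
  proof -
    have "n - 2 - (k - 2) = n - k" "n - 2 - 1 = n - 3"
      using assms by auto
    then show ?thesis
      using binomial_absorb_comp[of "n - 2" "k - 2"] by simp
  qed
  then have "real (n - k) * a1 = real (n - 2) * a2"
    unfolding a1_def a2_def by (metis of_nat_mult)
  then have absorb_comp: "(real n - real k) * a1 = (real n - 2) * a2"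
    using assms by simp
  show ?thesis
    unfolding B_def[symmetric] a1_def[symmetric] a2_def[symmetric]
    using absorb absorb_comp by algebra
qed

lemma pochhammer_ratio_bound_small:
  fixes k m :: nat
  assumes "8 \<le> k" "k \<le> 15" "1 \<le> m" "m \<le> k"
  shows "2 * (2*k + m - 1)^2 * (2*k + m - 2)^2 * pochhammer (m + 1) (k - 1)
           \<le> (k + m)^2 * m^2 * pochhammer (k + m + 1) (k - 1)"
proof -
  \<comment> \<open>At k = 8, m = 1 the two sides differ by about 1%, so only exact evaluation works here.\<close>
  have "k \<in> set [8..<16]" "m \<in> set [1..<16]"
    using assms by auto
  then have "k \<in> {8, 9, 10, 11, 12, 13, 14, 15}" "m \<in> {1, 2, 3, 4, 5, 6, 7, 8, 9, 10, 11, 12, 13, 14, 15}"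
    by (simp_all add: upt_rec eval_nat_numeral)
  then show ?thesis
    using assms(4) by (auto simp: pochhammer_numeral simp del: One_nat_def)
qed

lemma pochhammer_ratio_bound_large:
  fixes k m :: nat
  assumes "16 \<le> k" "1 \<le> m" "m \<le> k"
  shows "2 * (2*real k + real m - 1)^2 * (2*real k + real m - 2)^2 * pochhammer (real m + 1) (k - 1)
           \<le> (real k + real m)^2 * (real m)^2 * pochhammer (real k + real m + 1) (k - 1)"
proof -
  define s where "s = real k + real m"
  define r where "r = k - 3"
  have r: "k - 1 = Suc (Suc r)" "13 \<le> r"
    using assms(1) by (simp_all add: r_def)
  have "(192::real) \<le> (3/2)^13" by (simp add: power_divide)
  also have "\<dots> \<le> (3/2)^r" using r(2) by (intro power_increasing) auto
  finally have "192 * pochhammer (real m + 3) r \<le> (3/2)^r * pochhammer (real m + 3) r"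
    using pochhammer_pos[of "real m + 3" r] by (intro mult_right_mono) auto
  also have "\<dots> \<le> pochhammer (s + 3) r"
    using pochhammer_shift_ge_power[of "real m + 3" r "real k"] r assms
    by (simp add: s_def add_ac)
  finally have tail: "192 * pochhammer (real m + 3) r \<le> pochhammer (s + 3) r" .
  have m: "1 \<le> real m" "real m \<le> s" using assms by (auto simp: s_def)
  have "(2*real k + real m - 1) * (2*real k + real m - 2) \<le> (2 * s) * (2 * s)"
    using assms by (intro mult_mono) (auto simp: s_def)
  then have XY: "((2*real k + real m - 1) * (2*real k + real m - 2))^2 \<le> (4 * s^2)^2"
    using assms by (intro power_mono) (auto simp: power2_eq_square)
  have m12: "(real m + 1) * (real m + 2) \<le> 6 * (real m)^2"
  proof -
    have "1 * real m \<le> real m * real m"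
      using m(1) by (intro mult_right_mono) auto
    moreover have "(real m + 1) * (real m + 2) = real m * real m + 3 * real m + 2"
      by algebra
    ultimately show ?thesis
      using m(1) unfolding power2_eq_square by linarith
  qed
  have "2 * ((2*real k + real m - 1) * (2*real k + real m - 2))^2 * ((real m + 1) * (real m + 2))
          \<le> 2 * (4 * s^2)^2 * (6 * (real m)^2)"
    using mult_mono[OF mult_left_mono[OF XY, of 2] m12] by simp
  also have "\<dots> = 192 * s^2 * (real m)^2 * s^2" by algebra
  also have "\<dots> \<le> 192 * s^2 * (real m)^2 * ((s + 1) * (s + 2))"
    using m by (intro mult_left_mono) (auto simp: algebra_simps power2_eq_square)
  finally have head: "2 * (2*real k + real m - 1)^2 * (2*real k + real m - 2)^2 * ((real m + 1) * (real m + 2))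
                \<le> 192 * s^2 * (real m)^2 * ((s + 1) * (s + 2))"
    by (simp add: power_mult_distrib)
  have split_m: "pochhammer (real m + 1) (k - 1) = (real m + 1) * (real m + 2) * pochhammer (real m + 3) r"
    unfolding r(1) by (simp add: pochhammer_rec numeral_eq_Suc add_ac)
  have split_s: "pochhammer (s + 1) (k - 1) = (s + 1) * (s + 2) * pochhammer (s + 3) r"
    unfolding r(1) by (simp add: pochhammer_rec numeral_eq_Suc add_ac)
  have "2 * (2*real k + real m - 1)^2 * (2*real k + real m - 2)^2 * pochhammer (real m + 1) (k - 1)
          = 2 * (2*real k + real m - 1)^2 * (2*real k + real m - 2)^2 * ((real m + 1) * (real m + 2))
              * pochhammer (real m + 3) r"
    unfolding split_m by (simp add: mult_ac)
  also have "\<dots> \<le> 192 * s^2 * (real m)^2 * ((s + 1) * (s + 2)) * pochhammer (real m + 3) r"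
    using head pochhammer_pos[of "real m + 3" r] by (intro mult_right_mono) auto
  also have "\<dots> = s^2 * (real m)^2 * ((s + 1) * (s + 2)) * (192 * pochhammer (real m + 3) r)"
    by simp
  also have "\<dots> \<le> s^2 * (real m)^2 * ((s + 1) * (s + 2)) * pochhammer (s + 3) r"
    using tail m by (intro mult_left_mono) auto
  also have "\<dots> = s^2 * (real m)^2 * pochhammer (s + 1) (k - 1)"
    unfolding split_s by (simp add: mult_ac)
  finally show ?thesis
    by (simp add: s_def add_ac)
qed

lemma pochhammer_ratio_bound:
  fixes k m :: nat
  assumes "8 \<le> k" "1 \<le> m" "m \<le> k"
  shows "2 * (2*real k + real m - 1)^2 * (2*real k + real m - 2)^2 * pochhammer (real m + 1) (k - 1)
           \<le> (real k + real m)^2 * (real m)^2 * pochhammer (real k + real m + 1) (k - 1)"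
proof (cases "k \<le> 15")
  case True
  then have "real (2 * (2*k + m - 1)^2 * (2*k + m - 2)^2 * pochhammer (m + 1) (k - 1))
               \<le> real ((k + m)^2 * m^2 * pochhammer (k + m + 1) (k - 1))"
    using pochhammer_ratio_bound_small assms by (simp only: of_nat_le_iff)
  then show ?thesis
    using assms by (simp add: of_nat_diff pochhammer_of_nat[symmetric] add_ac)
next
  case False
  then show ?thesis
    using pochhammer_ratio_bound_large assms by simp
qed

lemma choose_ratio_bound:
  fixes n k :: nat
  assumes "8 \<le> k" "2 * k + 1 \<le> n" "n \<le> 3 * k"
  shows "2 * (real n - 1)^2 * (real n - 2)^2 * real ((n - k - 1) choose (k - 1))
           \<le> (real n - real k)^2 * (real n - 2 * real k)^2 * real ((n - 1) choose (k - 1))"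
proof -
  define m where "m = n - 2 * k"
  have n: "n = 2 * k + m" and m: "1 \<le> m" "m \<le> k"
    using assms by (auto simp: m_def)
  have "n - k - 1 = m + (k - 1)" "n - 1 = (k + m) + (k - 1)"
    using assms by (auto simp: n)
  then have "real ((n - k - 1) choose (k - 1)) = pochhammer (real m + 1) (k - 1) / fact (k - 1)"
    "real ((n - 1) choose (k - 1)) = pochhammer (real k + real m + 1) (k - 1) / fact (k - 1)"
    by (simp_all only: real_choose_eq_pochhammer of_nat_add)
  then show ?thesis
    using divide_right_mono[OF pochhammer_ratio_bound[OF assms(1) m], of "fact (k - 1)"]
    by (simp add: n algebra_simps)
qed

theorem lemma2p8:
  fixes n k :: nat
  assumes "k \<ge> 8" and "2 * k + 1 \<le> n" and "n \<le> 3 * k"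
  shows "real ((n - 2) choose (k - 2)) + 2 * real ((n - 3) choose (k - 2))
          + (h n k)^2 / (real ((n - 2) choose (k - 2)) + 2 * real ((n - 3) choose (k - 2)))
         > 2 * real ((n - 1) choose (k - 1))"
proof -
  define B where "B = real ((n - 1) choose (k - 1))"
  define c where "c = real ((n - k - 1) choose (k - 1))"
  define A where "A = real ((n - 2) choose (k - 2)) + 2 * real ((n - 3) choose (k - 2))"
  define P where "P = (real n - 1) * (real n - 2)"
  define Q where "Q = (real n - real k) * (real n - 2 * real k)"
  have identity: "(B - A) * P = B * Q"
    using choose_difference_identity[of k n] assms
    by (simp add: A_def B_def P_def Q_def algebra_simps)
  have bound: "2 * P^2 * c \<le> Q^2 * B"
    using choose_ratio_bound[OF assms]
    by (simp add: c_def B_def P_def Q_def power_mult_distrib mult_ac)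
  have "P > 0" using assms by (simp add: P_def)
  moreover have "2 * B * c * P^2 \<le> ((B - A) * P)^2"
    using mult_left_mono[OF bound, of B] unfolding identity
    by (simp add: B_def power_mult_distrib power2_eq_square algebra_simps)
  ultimately have "2 * B * c \<le> (B - A)^2"
    by (simp add: power_mult_distrib)
  moreover have "0 < A"
    using assms by (simp add: A_def add_pos_nonneg)
  moreover have "0 \<le> c" "c \<le> B"
    by (simp_all add: B_def c_def binomial_right_mono)
  ultimately have "2 * B < A + (B - c + 1)^2 / A"
    by (intro double_lt_add_square_div)
  then show ?thesis
    by (simp add: h_def A_def B_def c_def)
qed

end
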